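(* Let Assumptions 1, 2 and 3 hold with $\|\cdot\|=\|\cdot\|_*=\|\cdot\|_2$. Run the Robust Stochastic Approximation algorithm for $N-1$ iterations from $x_1\in X$ with constant stepsizes $\gamma_\tau=\gamma=\dfrac{D_X}{\sqrt{2(M_2^2+L^2)}\sqrt N}$, $\tau=1,\dots,N$, where $D_X=\max_{x\in X}\|x-x_1\|_2$. Then the estimate $g^N=\frac1N\sum_{\tau=1}^N g(x_\tau,\xi_\tau)$ satisfies $$\mathbb E\big[|g^N-f(x_* )|\big]\le\frac{M_1+D_X\sqrt{2(M_2^2+L^2)}}{\sqrt N}.$$
   Context: Setting: $E=\mathbb R^n$; $X\subset E$ nonempty closed bounded convex; $\xi$ a random vector with support $\Xi$; $g(x,\xi)$ Borel, convex in $x$, integrable in $\xi$; $f(x)=\mathbb E[g(x,\xi)]$ is convex and Lipschitz on $X$, and $x_*$ is a minimizer of $f$ over $X$. $\xi_1,\xi_2,\dots$ are i.i.d. copies of $\xi$. A stochastic oracle, queried at $x$ at time $t$, returns $g(x,\xi_t)$ and a measurable selection $G(x,\xi_t)\in\partial_xg(x,\xi_t)$. Let $f'(x):=\mathbb E[G(x,\xi)]$, $\delta(x,\xi)=g(x,\xi)-f(x)$, $\Delta(x,\xi)=G(x,\xi)-f'(x)$. Assumption 1: $\|f'(x)\|_*\le L$ for all $x\in X$ and all subgradients $f'(x)$. Assumption 2: $f(x)=\mathbb E[g(x,\xi)]$ and $\mathbb E[G(x,\xi)]\in\partial f(x)$ for all $x\in X$. Assumption 3: for all $x\in X$, $\mathbb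 E[\delta^2(x,\xi)]\le M_1^2$ and $\mathbb E[\|\Delta(x,\xi)\|_*^2]\le M_2^2$, with $M_1,M_2\in(0,\infty)$. RSA algorithm: $x_{t+1}=\Pi_X(x_t-\gamma_tG(x_t,\xi_t))$, $t=1,\dots,N-1$, where $\Pi_X$ is the Euclidean projection onto $X$. *)

theory Defs
  imports "HOL-Analysis.Analysis" "HOL-Probability.Probability"
begin

definition is_subgradient :: "('a::euclidean_space \<Rightarrow> real) \<Rightarrow> 'a \<Rightarrow> 'a \<Rightarrow> bool" where
  "is_subgradient h x v \<longleftrightarrow> (\<forall>y. h y \<ge> h x + inner v (y - x))"

text \<open>Robust Stochastic Approximation iterates with constant stepsize gam.
  rsa X G gam x1 xi k is the point x_(k+1); x_1 = x1 and
  x_(k+2) = Proj_X (x_(k+1) - gam * G(x_(k+1), xi_(k+1))).\<close>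
primrec rsa :: "'a::euclidean_space set \<Rightarrow> ('a \<Rightarrow> 'b \<Rightarrow> 'a) \<Rightarrow> real \<Rightarrow> 'a \<Rightarrow> (nat \<Rightarrow> 'b) \<Rightarrow> nat \<Rightarrow> 'a" where
  "rsa X G gam x1 xi 0 = x1"
| "rsa X G gam x1 xi (Suc k) =
     closest_point X (rsa X G gam x1 xi k - gam *\<^sub>R G (rsa X G gam x1 xi k) (xi (Suc k)))"

end

theory Submission
  imports Defs
begin

(* Write g^N - f(xstar) = S_N / N + (1/N) * sum_{j<N} (f(x_j) - f(xstar)), where
   S_N = sum_{j<N} (g(x_j, xi_{j+1}) - f(x_j)) is the accumulated sampling error.
   Since xi_{j+1} is independent of the past (which determines x_j), S_N is a sum of
   martingale differences and E[S_N^2] <= N * M1^2.  The summed expected optimality gaps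
   are controlled by the classical RSA recursion
     E|x_{k+1} - xstar|^2 + 2 gamma E[f(x_k) - f(xstar)] <= E|x_k - xstar|^2 + gamma^2 (M2^2 + L^2),
   which for the constant stepsize of the theorem gives a bound D_X * sqrt(2 (M2^2 + L^2)) * sqrt N.
   Finally |S_N| <= S_N^2 / (2c) + c/2 with c = sqrt N * M1 turns the second moment into
   a first-moment bound. *)

lemma (in prob_space) nn_integral_add_const:
  assumes "u \<in> borel_measurable M" "\<And>x. 0 \<le> u x" "0 \<le> c"
  shows "(\<integral>\<^sup>+x. ennreal (u x + c) \<partial>M) = (\<integral>\<^sup>+x. ennreal (u x) \<partial>M) + ennreal c"
proof -
  have "(\<integral>\<^sup>+x. ennreal (u x + c) \<partial>M) = (\<integral>\<^sup>+x. ennreal (u x) + ennreal c \<partial>M)"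
    using assms by (intro nn_integral_cong) (simp add: ennreal_plus)
  also have "\<dots> = (\<integral>\<^sup>+x. ennreal (u x) \<partial>M) + ennreal c"
    using assms by (simp add: nn_integral_add emeasure_space_1)
  finally show ?thesis .
qed

text \<open>If \<open>D\<close> has mean zero and second moment at most \<open>V\<close>, then \<open>w + c D\<close> has second moment at
  most \<open>\<parallel>w\<parallel>\<^sup>2 + c\<^sup>2 V\<close>: the cross term vanishes in expectation.\<close>

lemma (in prob_space) second_moment_shift:
  fixes D :: "'a \<Rightarrow> 'v::euclidean_space"
  assumes int: "integrable M D" and mean_zero: "(\<integral>s. D s \<partial>M) = 0"
    and var: "(\<integral>\<^sup>+ s. ennreal ((norm (D s))\<^sup>2) \<partial>M) \<le> ennreal V" and "0 \<le> V"
  shows "(\<integral>\<^sup>+ s. ennreal ((norm (w + c *\<^sub>R D s))\<^sup>2) \<partial>M) \<le> ennreal ((norm w)\<^sup>2 + c\<^sup>2 * V)"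
proof -
  have int_sq: "integrable M (\<lambda>s. (norm (D s))\<^sup>2)"
    using int var by (intro integrableI_nonneg) (auto intro: le_less_trans)
  have "ennreal (\<integral>s. (norm (D s))\<^sup>2 \<partial>M) \<le> ennreal V"
    using var by (subst nn_integral_eq_integral[OF int_sq, symmetric]) auto
  then have var_real: "(\<integral>s. (norm (D s))\<^sup>2 \<partial>M) \<le> V"
    using \<open>0 \<le> V\<close> by simp
  have expand: "(norm (w + c *\<^sub>R D s))\<^sup>2 = (norm w)\<^sup>2 + 2 * c * (w \<bullet> D s) + c\<^sup>2 * (norm (D s))\<^sup>2" for s
  proof -
    have "(norm (w + c *\<^sub>R D s))\<^sup>2 = (w + c *\<^sub>R D s) \<bullet> (w + c *\<^sub>R D s)"
      by (rule power2_norm_eq_inner)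
    also have "\<dots> = w \<bullet> w + 2 * c * (w \<bullet> D s) + c\<^sup>2 * (D s \<bullet> D s)"
      by (simp add: inner_add_left inner_add_right inner_commute[of "D s" w] power2_eq_square algebra_simps)
    finally show ?thesis by (simp add: power2_norm_eq_inner)
  qed
  have int_cross: "integrable M (\<lambda>s. w \<bullet> D s)" using int by simp
  have cross_zero: "(\<integral>s. w \<bullet> D s \<partial>M) = 0" using int mean_zero by simp
  have int_expanded: "integrable M (\<lambda>s. (norm w)\<^sup>2 + 2 * c * (w \<bullet> D s) + c\<^sup>2 * (norm (D s))\<^sup>2)"
    using int_cross int_sq by simp
  have "(\<integral>\<^sup>+ s. ennreal ((norm (w + c *\<^sub>R D s))\<^sup>2) \<partial>M)
      = ennreal (\<integral>s. (norm w)\<^sup>2 + 2 * c * (w \<bullet> D s) + c\<^sup>2 * (norm (D s))\<^sup>2 \<partial>M)"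
    unfolding expand by (rule nn_integral_eq_integral[OF int_expanded]) (auto simp flip: expand)
  also have "\<dots> = ennreal ((norm w)\<^sup>2 + c\<^sup>2 * (\<integral>s. (norm (D s))\<^sup>2 \<partial>M))"
    using int_cross int_sq cross_zero by (simp add: prob_space)
  also have "\<dots> \<le> ennreal ((norm w)\<^sup>2 + c\<^sup>2 * V)"
    using var_real by (intro ennreal_leI add_left_mono mult_left_mono) auto
  finally show ?thesis .
qed

lemma subgradient_step_descent:
  fixes x y v :: "'a::euclidean_space"
  assumes sub: "is_subgradient f x v" and bound: "norm v \<le> L" and "0 \<le> \<gamma>"
  shows "(norm (x - y - \<gamma> *\<^sub>R v))\<^sup>2 + 2 * \<gamma> * (f x - f y) \<le> (norm (x - y))\<^sup>2 + \<gamma>\<^sup>2 * L\<^sup>2"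
proof -
  have expand: "(norm (x - y - \<gamma> *\<^sub>R v))\<^sup>2 = (norm (x - y))\<^sup>2 - 2 * \<gamma> * (v \<bullet> (x - y)) + \<gamma>\<^sup>2 * (norm v)\<^sup>2"
  proof -
    have "(norm (x - y - \<gamma> *\<^sub>R v))\<^sup>2 = (x - y - \<gamma> *\<^sub>R v) \<bullet> (x - y - \<gamma> *\<^sub>R v)"
      by (rule power2_norm_eq_inner)
    also have "\<dots> = (x - y) \<bullet> (x - y) - 2 * \<gamma> * (v \<bullet> (x - y)) + \<gamma>\<^sup>2 * (v \<bullet> v)"
      by (simp add: inner_diff_left inner_diff_right inner_commute[of v "x - y"] power2_eq_square algebra_simps)
         (simp add: inner_commute)
    finally show ?thesis by (simp add: power2_norm_eq_inner)
  qed
  have "f x - f y \<le> v \<bullet> (x - y)"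
    using sub unfolding is_subgradient_def by (auto simp: inner_diff_right dest: spec[of _ y])
  then have "2 * \<gamma> * (f x - f y) \<le> 2 * \<gamma> * (v \<bullet> (x - y))"
    using \<open>0 \<le> \<gamma>\<close> by (intro mult_left_mono) auto
  moreover have "\<gamma>\<^sup>2 * (norm v)\<^sup>2 \<le> \<gamma>\<^sup>2 * L\<^sup>2"
    using bound by (intro mult_left_mono power_mono) auto
  ultimately show ?thesis unfolding expand by simp
qed

text \<open>Weighted AM-GM: \<open>|t| \<le> t\<^sup>2/(2c) + c/2\<close>. It turns the second-moment bound on the sampling
  error into a first-moment bound.\<close>

lemma abs_le_square_plus:
  fixes c t :: real
  assumes "0 < c"
  shows "\<bar>t\<bar> \<le> t\<^sup>2 / (2 * c) + c / 2"
proof -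
  have "0 \<le> (\<bar>t\<bar> - c)\<^sup>2" by simp
  then have "2 * c * \<bar>t\<bar> \<le> t\<^sup>2 + c\<^sup>2" by (simp add: power2_eq_square algebra_simps)
  then show ?thesis using assms by (simp add: field_simps power2_eq_square)
qed

lemma ennreal_plus3:
  fixes u v w :: real
  assumes "0 \<le> u" "0 \<le> v" "0 \<le> w"
  shows "ennreal (u + v + w) = ennreal u + ennreal v + ennreal w"
  using assms by (simp add: ennreal_plus)

text \<open>Arithmetic behind the stepsize \<open>\<gamma> = D / (s r)\<close>: it balances the two terms of the
  recursion bound, each of which is \<open>O(D s r)\<close>.\<close>

lemma stepsize_tradeoff:
  fixes D s r \<gamma> A :: real
  assumes "0 < D" "0 < s" "0 < r" "\<gamma> = D / (s * r)" "A \<le> D\<^sup>2"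
  shows "(A + r\<^sup>2 * (\<gamma>\<^sup>2 * (s\<^sup>2 / 2))) / (2 * \<gamma>) \<le> D * s * r"
proof -
  have "r\<^sup>2 * (\<gamma>\<^sup>2 * (s\<^sup>2 / 2)) = D\<^sup>2 / 2"
    using assms by (simp add: power_divide power_mult_distrib)
  then have "(A + r\<^sup>2 * (\<gamma>\<^sup>2 * (s\<^sup>2 / 2))) / (2 * \<gamma>) \<le> (3 / 2 * D\<^sup>2) / (2 * \<gamma>)"
    using assms by (intro divide_right_mono) auto
  also have "\<dots> = 3 / 4 * (D * s * r)"
    using assms(1-3) unfolding assms(4) by (simp add: field_simps power2_eq_square)
  also have "\<dots> \<le> D * s * r"
    using assms by simp
  finally show ?thesis .
qed

text \<open>Arithmetic of the final bound for the AM-GM weight \<open>c = r M1\<close>, where \<open>r = \<surd>N\<close>.\<close>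

lemma final_bound_arith:
  fixes M1 r D s :: real
  assumes "0 < M1" "0 < r"
  shows "M1\<^sup>2 / (2 * (r * M1)) + r * M1 / (2 * r\<^sup>2) + D * s * r / r\<^sup>2 = (M1 + D * s) / r"
  using assms by (simp add: field_simps power2_eq_square)

lemma norm_diff_le_SUP:
  fixes X :: "'a::real_normed_vector set"
  assumes "bounded X" "x \<in> X"
  shows "norm (x - a) \<le> (SUP y\<in>X. norm (y - a))"
proof -
  have "bounded ((\<lambda>y. y - a) ` X)"
    using bounded_translation[OF assms(1), of "- a"] by simp
  then have "bdd_above ((\<lambda>y. norm (y - a)) ` X)"
    by (simp add: bdd_above_norm[symmetric] image_image)
  with assms(2) show ?thesis by (rule cSUP_upper)
qed

lemma rsa_in:
  assumes "closed X" "X \<noteq> {}" "x1 \<in> X"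
  shows "rsa X G gam x1 z k \<in> X"
  by (cases k) (auto simp: assms closest_point_in_set)

lemma rsa_local:
  assumes "\<And>t. t \<le> k \<Longrightarrow> z t = z' t"
  shows "rsa X G gam x1 z k = rsa X G gam x1 z' k"
  using assms by (induction k) auto

lemma rsa_measurable:
  fixes G :: "'a::euclidean_space \<Rightarrow> 'b \<Rightarrow> 'a"
  assumes G_meas: "(\<lambda>(x, s). G x s) \<in> borel_measurable (borel \<Otimes>\<^sub>M P)"
    and X: "convex X" "closed X" "X \<noteq> {}" and "k < n"
  shows "(\<lambda>y. rsa X G gam x1 y k) \<in> borel_measurable (PiM {..<n} (\<lambda>_. P))"
  using \<open>k < n\<close>
proof (induction k)
  case 0
  then show ?case by simp
next
  case (Suc k)
  then have "(\<lambda>y. (rsa X G gam x1 y k, y (Suc k))) \<in> measurable (PiM {..<n} (\<lambda>_. P)) (borel \<Otimes>\<^sub>M P)"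
    by (intro measurable_Pair measurable_component_singleton) auto
  from measurable_compose[OF this G_meas] Suc
  have "(\<lambda>y. rsa X G gam x1 y k - gam *\<^sub>R G (rsa X G gam x1 y k) (y (Suc k)))
      \<in> borel_measurable (PiM {..<n} (\<lambda>_. P))"
    by simp
  then show ?case
    using borel_measurable_continuous_onI[OF continuous_on_closest_point[OF X]] by simp
qed

locale iid_samples =
  M: prob_space M + P: prob_space P
  for M :: "'m measure" and P :: "'b measure" +
  fixes \<xi> :: "nat \<Rightarrow> 'm \<Rightarrow> 'b"
  assumes xi_rv: "\<And>t. \<xi> t \<in> measurable M P"
    and xi_distr: "\<And>t. distr M P (\<xi> t) = P"
    and xi_indep: "M.indep_vars (\<lambda>_. P) \<xi> UNIV"
begin

abbreviation hist_space :: "nat \<Rightarrow> (nat \<Rightarrow> 'b) measure" where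
  "hist_space n \<equiv> PiM {..<n} (\<lambda>_. P)"

definition hist :: "nat \<Rightarrow> 'm \<Rightarrow> nat \<Rightarrow> 'b" where
  "hist n \<omega> = restrict (\<lambda>i. \<xi> i \<omega>) {..<n}"

lemma hist_apply: "t < n \<Longrightarrow> hist n \<omega> t = \<xi> t \<omega>"
  by (simp add: hist_def)

lemma hist_measurable: "hist n \<in> measurable M (hist_space n)"
  unfolding hist_def by (intro measurable_restrict) (simp add: xi_rv)

text \<open>Conditioning on the history: since \<open>\<xi> n\<close> is independent of \<open>hist n\<close> and has law \<open>P\<close>,
  integrating a function of \<open>(hist n, \<xi> n)\<close> amounts to first integrating out the fresh
  sample against \<open>P\<close> (Tonelli for the product of the two independent laws).\<close>

lemma nn_integral_fresh_sample:
  assumes h: "h \<in> borel_measurable (hist_space n \<Otimes>\<^sub>M P)"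
  shows "(\<integral>\<^sup>+\<omega>. h (hist n \<omega>, \<xi> n \<omega>) \<partial>M) = (\<integral>\<^sup>+\<omega>. (\<integral>\<^sup>+s. h (hist n \<omega>, s) \<partial>P) \<partial>M)"
proof -
  let ?R = "PiM {n} (\<lambda>_. P)"
  let ?Z = "\<lambda>\<omega>. restrict (\<lambda>i. \<xi> i \<omega>) {n}"
  let ?H = "distr M (hist_space n) (hist n)" and ?F = "distr M ?R ?Z"
  interpret F: prob_space ?F
    by (rule M.prob_space_distr) (intro measurable_restrict xi_rv)
  have mZ: "?Z \<in> measurable M ?R" by (intro measurable_restrict xi_rv)
  have mn: "(\<lambda>z. z n) \<in> measurable ?R P" by (rule measurable_component_singleton) simp
  have "M.indep_var (hist_space n) (hist n) ?R ?Z"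
    unfolding hist_def by (rule M.indep_var_restrict[OF xi_indep]) auto
  then have joint: "?H \<Otimes>\<^sub>M ?F = distr M (hist_space n \<Otimes>\<^sub>M ?R) (\<lambda>\<omega>. (hist n \<omega>, ?Z \<omega>))"
    unfolding M.indep_var_distribution_eq by blast
  have hn: "(\<lambda>w. h (fst w, snd w n)) \<in> borel_measurable (hist_space n \<Otimes>\<^sub>M ?R)"
    by (rule measurable_compose[OF _ h]) (auto intro!: measurable_Pair measurable_compose[OF measurable_snd mn])
  have hn': "(\<lambda>w. h (fst w, snd w n)) \<in> borel_measurable (?H \<Otimes>\<^sub>M ?F)"
    using hn measurable_cong_sets[OF sets_pair_measure_cong[OF sets_distr sets_distr] refl] by blast
  have fresh: "(\<integral>\<^sup>+z. h (y, z n) \<partial>?F) = (\<integral>\<^sup>+s. h (y, s) \<partial>P)" if y: "y \<in> space (hist_space n)" for y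
  proof -
    have "distr ?F P (\<lambda>z. z n) = distr M P (\<xi> n)"
      using distr_distr[OF mn mZ] by (simp add: o_def)
    then have "(\<integral>\<^sup>+s. h (y, s) \<partial>P) = (\<integral>\<^sup>+s. h (y, s) \<partial>distr ?F P (\<lambda>z. z n))"
      by (simp add: xi_distr)
    also have "\<dots> = (\<integral>\<^sup>+z. h (y, z n) \<partial>?F)"
      by (rule nn_integral_distr) (use mn measurable_Pair2[OF h y] in auto)
    finally show ?thesis by simp
  qed
  have "(\<integral>\<^sup>+\<omega>. h (hist n \<omega>, \<xi> n \<omega>) \<partial>M)
      = (\<integral>\<^sup>+w. h (fst w, snd w n) \<partial>distr M (hist_space n \<Otimes>\<^sub>M ?R) (\<lambda>\<omega>. (hist n \<omega>, ?Z \<omega>)))"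
    by (subst nn_integral_distr) (auto intro!: measurable_Pair hist_measurable mZ hn)
  also have "\<dots> = (\<integral>\<^sup>+y. (\<integral>\<^sup>+z. h (y, z n) \<partial>?F) \<partial>?H)"
    unfolding joint[symmetric] by (subst F.nn_integral_fst[OF hn', symmetric]) simp
  also have "\<dots> = (\<integral>\<^sup>+y. (\<integral>\<^sup>+s. h (y, s) \<partial>P) \<partial>?H)"
    by (rule nn_integral_cong) (simp add: fresh)
  also have "\<dots> = (\<integral>\<^sup>+\<omega>. (\<integral>\<^sup>+s. h (hist n \<omega>, s) \<partial>P) \<partial>M)"
    using P.borel_measurable_nn_integral_fst[OF h] by (subst nn_integral_distr) (auto intro: hist_measurable)
  finally show ?thesis .
qed

lemma nn_integral_fresh_sample_le:
  assumes h: "h \<in> borel_measurable (hist_space n \<Otimes>\<^sub>M P)"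
    and bound: "\<And>y. y \<in> space (hist_space n) \<Longrightarrow> (\<integral>\<^sup>+s. h (y, s) \<partial>P) \<le> u y"
  shows "(\<integral>\<^sup>+\<omega>. h (hist n \<omega>, \<xi> n \<omega>) \<partial>M) \<le> (\<integral>\<^sup>+\<omega>. u (hist n \<omega>) \<partial>M)"
  unfolding nn_integral_fresh_sample[OF h]
  by (intro nn_integral_mono bound measurable_space[OF hist_measurable])

end

locale rsa_setting = iid_samples M P \<xi>
  for M :: "'m measure" and P :: "'b measure" and \<xi> :: "nat \<Rightarrow> 'm \<Rightarrow> 'b" +
  fixes X :: "'a::euclidean_space set"
    and g :: "'a \<Rightarrow> 'b \<Rightarrow> real" and G :: "'a \<Rightarrow> 'b \<Rightarrow> 'a" and f :: "'a \<Rightarrow> real"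
    and L M1 M2 :: real and x1 xstar :: 'a and \<gamma> :: real
  assumes X_ne: "X \<noteq> {}" and X_closed: "closed X" and X_convex: "convex X"
    and g_meas: "(\<lambda>(x, s). g x s) \<in> borel_measurable (borel \<Otimes>\<^sub>M P)"
    and g_int: "\<And>x. integrable P (g x)"
    and G_meas: "(\<lambda>(x, s). G x s) \<in> borel_measurable (borel \<Otimes>\<^sub>M P)"
    and f_def: "\<And>x. f x = (\<integral>s. g x s \<partial>P)"
    and xstar_in: "xstar \<in> X" and xstar_min: "\<And>x. x \<in> X \<Longrightarrow> f xstar \<le> f x"
    and A1: "\<And>x v. x \<in> X \<Longrightarrow> is_subgradient f x v \<Longrightarrow> norm v \<le> L"
    and A2_int: "\<And>x. x \<in> X \<Longrightarrow> integrable P (G x)"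
    and A2_sub: "\<And>x. x \<in> X \<Longrightarrow> is_subgradient f x (\<integral>s. G x s \<partial>P)"
    and A3_1: "\<And>x. x \<in> X \<Longrightarrow> (\<integral>\<^sup>+ s. ennreal ((g x s - f x)\<^sup>2) \<partial>P) \<le> ennreal (M1\<^sup>2)"
    and A3_2: "\<And>x. x \<in> X \<Longrightarrow>
       (\<integral>\<^sup>+ s. ennreal ((norm (G x s - (\<integral>s'. G x s' \<partial>P)))\<^sup>2) \<partial>P) \<le> ennreal (M2\<^sup>2)"
    and x1_in: "x1 \<in> X"
    and stepsize_nonneg: "0 \<le> \<gamma>"
begin

abbreviation iter :: "(nat \<Rightarrow> 'b) \<Rightarrow> nat \<Rightarrow> 'a" where
  "iter z k \<equiv> rsa X G \<gamma> x1 z k"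

lemma iter_in_X: "iter z k \<in> X"
  using X_closed X_ne x1_in by (rule rsa_in)

lemma iter_measurable: "k < n \<Longrightarrow> (\<lambda>y. iter y k) \<in> borel_measurable (hist_space n)"
  by (rule rsa_measurable[OF G_meas X_convex X_closed X_ne])

lemma iter_hist: "k < n \<Longrightarrow> iter (hist n \<omega>) k = iter (\<lambda>t. \<xi> t \<omega>) k"
  by (rule rsa_local) (simp add: hist_def)

lemma iter_path_measurable: "(\<lambda>\<omega>. iter (\<lambda>t. \<xi> t \<omega>) k) \<in> borel_measurable M"
proof -
  have "(\<lambda>\<omega>. iter (hist (Suc k) \<omega>) k) \<in> borel_measurable M"
    by (rule measurable_compose[OF hist_measurable iter_measurable]) simp
  then show ?thesis by (simp add: iter_hist)
qed

lemma iter_sample_measurable: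
  "k < n \<Longrightarrow> (\<lambda>w. (iter (fst w) k, snd w)) \<in> measurable (hist_space n \<Otimes>\<^sub>M P) (borel \<Otimes>\<^sub>M P)"
  by (intro measurable_Pair measurable_compose[OF measurable_fst iter_measurable]) auto

lemma f_measurable: "f \<in> borel_measurable borel"
proof -
  have "(\<lambda>x. \<integral>s. g x s \<partial>P) \<in> borel_measurable borel"
    by (rule P.borel_measurable_lebesgue_integral) (use g_meas in simp)
  then show ?thesis by (simp add: f_def[abs_def])
qed

lemma projection_measurable: "closest_point X \<in> borel_measurable borel"
  by (rule borel_measurable_continuous_onI[OF continuous_on_closest_point[OF X_convex X_closed X_ne]])

lemma G_measurable: "G x \<in> borel_measurable P"
  using measurable_Pair2[OF G_meas, of x] by simp

definition noise :: "(nat \<Rightarrow> 'b) \<Rightarrow> nat \<Rightarrow> real" where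
  "noise z k = (\<Sum>j<k. g (iter z j) (z (Suc j)) - f (iter z j))"

lemma noise_measurable: "k < n \<Longrightarrow> (\<lambda>y. noise y k) \<in> borel_measurable (hist_space n)"
proof -
  assume "k < n"
  have "(\<lambda>y. g (iter y j) (y (Suc j))) \<in> borel_measurable (hist_space n)" if "j < k" for j
  proof -
    have "(\<lambda>y. (iter y j, y (Suc j))) \<in> measurable (hist_space n) (borel \<Otimes>\<^sub>M P)"
      using that \<open>k < n\<close> by (intro measurable_Pair iter_measurable measurable_component_singleton) auto
    from measurable_compose[OF this g_meas] show ?thesis by simp
  qed
  moreover have "(\<lambda>y. f (iter y j)) \<in> borel_measurable (hist_space n)" if "j < k" for j
    using that \<open>k < n\<close> by (intro measurable_compose[OF iter_measurable f_measurable]) simp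
  ultimately show ?thesis
    unfolding noise_def by (intro borel_measurable_sum borel_measurable_diff) auto
qed

lemma noise_Suc: "noise z (Suc k) = noise z k + (g (iter z k) (z (Suc k)) - f (iter z k))"
  by (simp add: noise_def)

lemma noise_hist: "k < n \<Longrightarrow> noise (hist n \<omega>) k = noise (\<lambda>t. \<xi> t \<omega>) k"
  unfolding noise_def by (intro sum.cong refl) (simp add: iter_hist hist_apply)

lemma noise_path_measurable: "(\<lambda>\<omega>. noise (\<lambda>t. \<xi> t \<omega>) k) \<in> borel_measurable M"
proof -
  have "(\<lambda>\<omega>. noise (hist (Suc k) \<omega>) k) \<in> borel_measurable M"
    by (rule measurable_compose[OF hist_measurable noise_measurable]) simp
  then show ?thesis by (simp add: noise_hist)
qed

text \<open>One fresh sample adds at most \<open>M1\<^sup>2\<close> to the second moment, since its error has mean zero.\<close>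

lemma sample_error_step:
  assumes "x \<in> X"
  shows "(\<integral>\<^sup>+s. ennreal ((a + (g x s - f x))\<^sup>2) \<partial>P) \<le> ennreal (a\<^sup>2 + M1\<^sup>2)"
proof -
  have "(\<integral>s. g x s - f x \<partial>P) = 0" using g_int by (simp add: f_def P.prob_space)
  moreover have "(\<integral>\<^sup>+ s. ennreal ((norm (g x s - f x))\<^sup>2) \<partial>P) \<le> ennreal (M1\<^sup>2)"
    using A3_1[OF assms] by simp
  ultimately show ?thesis
    using P.second_moment_shift[of "\<lambda>s. g x s - f x" "M1\<^sup>2" a 1] g_int by simp
qed

text \<open>The errors form a martingale difference sequence, so their second moments add up.\<close>

lemma noise_second_moment:
  "(\<integral>\<^sup>+\<omega>. ennreal ((noise (\<lambda>t. \<xi> t \<omega>) k)\<^sup>2) \<partial>M) \<le> ennreal (real k * M1\<^sup>2)"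
proof (induction k)
  case 0
  then show ?case by (simp add: noise_def)
next
  case (Suc k)
  let ?h = "\<lambda>w. ennreal ((noise (fst w) k + (g (iter (fst w) k) (snd w) - f (iter (fst w) k)))\<^sup>2)"
  have "(\<lambda>w. g (iter (fst w) k) (snd w)) \<in> borel_measurable (hist_space (Suc k) \<Otimes>\<^sub>M P)"
    using measurable_compose[OF iter_sample_measurable[of k "Suc k"] g_meas] by simp
  moreover have "(\<lambda>w. f (iter (fst w) k)) \<in> borel_measurable (hist_space (Suc k) \<Otimes>\<^sub>M P)"
    using measurable_compose[OF measurable_compose[OF measurable_fst iter_measurable[of k "Suc k"]] f_measurable] by simp
  ultimately have "?h \<in> borel_measurable (hist_space (Suc k) \<Otimes>\<^sub>M P)"
    using measurable_compose[OF measurable_fst noise_measurable[of k "Suc k"]] by measurable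
  then have "(\<integral>\<^sup>+\<omega>. ?h (hist (Suc k) \<omega>, \<xi> (Suc k) \<omega>) \<partial>M)
      \<le> (\<integral>\<^sup>+\<omega>. ennreal ((noise (hist (Suc k) \<omega>) k)\<^sup>2 + M1\<^sup>2) \<partial>M)"
    by (rule nn_integral_fresh_sample_le) (simp only: fst_conv snd_conv sample_error_step[OF iter_in_X])
  also have "\<dots> = (\<integral>\<^sup>+\<omega>. ennreal ((noise (\<lambda>t. \<xi> t \<omega>) k)\<^sup>2 + M1\<^sup>2) \<partial>M)"
    by (simp only: noise_hist lessI)
  also have "\<dots> = (\<integral>\<^sup>+\<omega>. ennreal ((noise (\<lambda>t. \<xi> t \<omega>) k)\<^sup>2) \<partial>M) + ennreal (M1\<^sup>2)"
    using noise_path_measurable by (intro M.nn_integral_add_const) auto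
  also have "\<dots> \<le> ennreal (real k * M1\<^sup>2) + ennreal (M1\<^sup>2)"
    using Suc.IH by (rule add_right_mono)
  also have "\<dots> = ennreal (real (Suc k) * M1\<^sup>2)"
    by (subst ennreal_plus[symmetric]) (auto simp: algebra_simps)
  finally show ?case
    by (simp add: noise_Suc noise_hist iter_hist)
qed

lemma projected_step:
  assumes x: "x \<in> X"
  shows "(\<integral>\<^sup>+s. ennreal ((norm (closest_point X (x - \<gamma> *\<^sub>R G x s) - xstar))\<^sup>2) \<partial>P)
      + ennreal (2 * \<gamma> * (f x - f xstar)) \<le> ennreal ((norm (x - xstar))\<^sup>2 + \<gamma>\<^sup>2 * (M2\<^sup>2 + L\<^sup>2))"
proof -
  define v where "v = (\<integral>s. G x s \<partial>P)"
  define w where "w = x - xstar - \<gamma> *\<^sub>R v"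
  have "(\<integral>s. G x s - v \<partial>P) = 0" using A2_int[OF x] by (simp add: v_def P.prob_space)
  moreover have "(\<integral>\<^sup>+ s. ennreal ((norm (G x s - v))\<^sup>2) \<partial>P) \<le> ennreal (M2\<^sup>2)"
    using A3_2[OF x] by (simp add: v_def)
  ultimately have second_moment:
    "(\<integral>\<^sup>+ s. ennreal ((norm (w + (- \<gamma>) *\<^sub>R (G x s - v)))\<^sup>2) \<partial>P) \<le> ennreal ((norm w)\<^sup>2 + \<gamma>\<^sup>2 * M2\<^sup>2)"
    using P.second_moment_shift[of "\<lambda>s. G x s - v" "M2\<^sup>2" w "- \<gamma>"] A2_int[OF x] by simp
  \<comment> \<open>The projection is nonexpansive and fixes \<open>xstar \<in> X\<close>.\<close>
  have nonexpansive: "norm (closest_point X (x - \<gamma> *\<^sub>R G x s) - xstar) \<le> norm (w + (- \<gamma>) *\<^sub>R (G x s - v))" for s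
  proof -
    have "dist (closest_point X (x - \<gamma> *\<^sub>R G x s)) (closest_point X xstar) \<le> dist (x - \<gamma> *\<^sub>R G x s) xstar"
      by (rule closest_point_lipschitz[OF X_convex X_closed X_ne])
    moreover have "w + (- \<gamma>) *\<^sub>R (G x s - v) = x - \<gamma> *\<^sub>R G x s - xstar"
      by (simp add: w_def algebra_simps)
    ultimately show ?thesis by (simp add: closest_point_self[OF xstar_in] dist_norm)
  qed
  have "(\<integral>\<^sup>+s. ennreal ((norm (closest_point X (x - \<gamma> *\<^sub>R G x s) - xstar))\<^sup>2) \<partial>P)
      \<le> ennreal ((norm w)\<^sup>2 + \<gamma>\<^sup>2 * M2\<^sup>2)"
    using second_moment
    by (rule order_trans[rotated]) (intro nn_integral_mono ennreal_leI power_mono nonexpansive norm_ge_zero)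
  then have "(\<integral>\<^sup>+s. ennreal ((norm (closest_point X (x - \<gamma> *\<^sub>R G x s) - xstar))\<^sup>2) \<partial>P)
      + ennreal (2 * \<gamma> * (f x - f xstar))
      \<le> ennreal ((norm w)\<^sup>2 + \<gamma>\<^sup>2 * M2\<^sup>2) + ennreal (2 * \<gamma> * (f x - f xstar))"
    by (rule add_right_mono)
  also have "\<dots> = ennreal ((norm w)\<^sup>2 + 2 * \<gamma> * (f x - f xstar) + \<gamma>\<^sup>2 * M2\<^sup>2)"
    using stepsize_nonneg xstar_min[OF x] by (subst ennreal_plus[symmetric]) (auto simp: algebra_simps mult_left_mono)
  also have "\<dots> \<le> ennreal ((norm (x - xstar))\<^sup>2 + \<gamma>\<^sup>2 * (M2\<^sup>2 + L\<^sup>2))"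
  proof (rule ennreal_leI)
    have "(norm w)\<^sup>2 + 2 * \<gamma> * (f x - f xstar) \<le> (norm (x - xstar))\<^sup>2 + \<gamma>\<^sup>2 * L\<^sup>2"
      unfolding w_def v_def using A2_sub[OF x] A1[OF x A2_sub[OF x]] stepsize_nonneg
      by (rule subgradient_step_descent)
    then show "(norm w)\<^sup>2 + 2 * \<gamma> * (f x - f xstar) + \<gamma>\<^sup>2 * M2\<^sup>2 \<le> (norm (x - xstar))\<^sup>2 + \<gamma>\<^sup>2 * (M2\<^sup>2 + L\<^sup>2)"
      by (simp add: algebra_simps)
  qed
  finally show ?thesis .
qed

text \<open>The same estimate with the gap term moved under the integral, as needed when \<open>x\<close> is
  itself random.\<close>

lemma projected_step_integral:
  assumes x: "x \<in> X"
  shows "(\<integral>\<^sup>+s. ennreal ((norm (closest_point X (x - \<gamma> *\<^sub>R G x s) - xstar))\<^sup>2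
      + 2 * \<gamma> * (f x - f xstar)) \<partial>P) \<le> ennreal ((norm (x - xstar))\<^sup>2 + \<gamma>\<^sup>2 * (M2\<^sup>2 + L\<^sup>2))"
proof -
  have "(\<lambda>s. (norm (closest_point X (x - \<gamma> *\<^sub>R G x s) - xstar))\<^sup>2) \<in> borel_measurable P"
    using G_measurable projection_measurable by measurable
  then have "(\<integral>\<^sup>+s. ennreal ((norm (closest_point X (x - \<gamma> *\<^sub>R G x s) - xstar))\<^sup>2
      + 2 * \<gamma> * (f x - f xstar)) \<partial>P) = (\<integral>\<^sup>+s. ennreal ((norm (closest_point X (x - \<gamma> *\<^sub>R G x s) - xstar))\<^sup>2) \<partial>P)
      + ennreal (2 * \<gamma> * (f x - f xstar))"
    using stepsize_nonneg xstar_min[OF x] by (intro P.nn_integral_add_const) auto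
  with projected_step[OF x] show ?thesis by simp
qed

definition gap :: "nat \<Rightarrow> 'm \<Rightarrow> real" where
  "gap j \<omega> = f (iter (\<lambda>t. \<xi> t \<omega>) j) - f xstar"

lemma gap_nonneg: "0 \<le> gap j \<omega>"
  unfolding gap_def using xstar_min[OF iter_in_X] by simp

lemma gap_measurable: "gap j \<in> borel_measurable M"
  unfolding gap_def[abs_def]
  using measurable_compose[OF iter_path_measurable f_measurable] by simp

text \<open>Expected one-step progress at the random iterate: the next sample is independent of
  the past, so \<open>projected_step\<close> applies conditionally on the history.\<close>

lemma distance_step:
  "(\<integral>\<^sup>+\<omega>. ennreal ((norm (iter (\<lambda>t. \<xi> t \<omega>) (Suc k) - xstar))\<^sup>2) \<partial>M)
     + ennreal (2 * \<gamma>) * (\<integral>\<^sup>+\<omega>. ennreal (gap k \<omega>) \<partial>M)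
   \<le> (\<integral>\<^sup>+\<omega>. ennreal ((norm (iter (\<lambda>t. \<xi> t \<omega>) k - xstar))\<^sup>2) \<partial>M) + ennreal (\<gamma>\<^sup>2 * (M2\<^sup>2 + L\<^sup>2))"
proof -
  let ?next = "\<lambda>y s. closest_point X (iter y k - \<gamma> *\<^sub>R G (iter y k) s)"
  let ?h = "\<lambda>w. ennreal ((norm (?next (fst w) (snd w) - xstar))\<^sup>2 + 2 * \<gamma> * (f (iter (fst w) k) - f xstar))"
  have "(\<lambda>w. G (iter (fst w) k) (snd w)) \<in> borel_measurable (hist_space (Suc k) \<Otimes>\<^sub>M P)"
    using measurable_compose[OF iter_sample_measurable[of k "Suc k"] G_meas] by simp
  moreover have "(\<lambda>w. f (iter (fst w) k)) \<in> borel_measurable (hist_space (Suc k) \<Otimes>\<^sub>M P)"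
    using measurable_compose[OF measurable_compose[OF measurable_fst iter_measurable[of k "Suc k"]] f_measurable]
    by simp
  ultimately have "?h \<in> borel_measurable (hist_space (Suc k) \<Otimes>\<^sub>M P)"
    using measurable_compose[OF measurable_fst iter_measurable[of k "Suc k"]] projection_measurable
    by measurable
  moreover have "(\<integral>\<^sup>+s. ?h (y, s) \<partial>P) \<le> ennreal ((norm (iter y k - xstar))\<^sup>2 + \<gamma>\<^sup>2 * (M2\<^sup>2 + L\<^sup>2))" for y
    using projected_step_integral[OF iter_in_X] by simp
  ultimately have "(\<integral>\<^sup>+\<omega>. ?h (hist (Suc k) \<omega>, \<xi> (Suc k) \<omega>) \<partial>M)
      \<le> (\<integral>\<^sup>+\<omega>. ennreal ((norm (iter (hist (Suc k) \<omega>) k - xstar))\<^sup>2 + \<gamma>\<^sup>2 * (M2\<^sup>2 + L\<^sup>2)) \<partial>M)"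
    by (rule nn_integral_fresh_sample_le)
  moreover have "(\<integral>\<^sup>+\<omega>. ?h (hist (Suc k) \<omega>, \<xi> (Suc k) \<omega>) \<partial>M)
      = (\<integral>\<^sup>+\<omega>. ennreal ((norm (iter (\<lambda>t. \<xi> t \<omega>) (Suc k) - xstar))\<^sup>2) \<partial>M)
        + ennreal (2 * \<gamma>) * (\<integral>\<^sup>+\<omega>. ennreal (gap k \<omega>) \<partial>M)"
  proof -
    have "(\<integral>\<^sup>+\<omega>. ?h (hist (Suc k) \<omega>, \<xi> (Suc k) \<omega>) \<partial>M)
        = (\<integral>\<^sup>+\<omega>. ennreal ((norm (iter (\<lambda>t. \<xi> t \<omega>) (Suc k) - xstar))\<^sup>2) + ennreal (2 * \<gamma>) * ennreal (gap k \<omega>) \<partial>M)"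
      using stepsize_nonneg gap_nonneg
      by (intro nn_integral_cong) (simp add: iter_hist hist_apply gap_def ennreal_plus ennreal_mult)
    also have "\<dots> = (\<integral>\<^sup>+\<omega>. ennreal ((norm (iter (\<lambda>t. \<xi> t \<omega>) (Suc k) - xstar))\<^sup>2) \<partial>M)
        + ennreal (2 * \<gamma>) * (\<integral>\<^sup>+\<omega>. ennreal (gap k \<omega>) \<partial>M)"
      using iter_path_measurable[of "Suc k"] gap_measurable[of k]
      by (simp add: nn_integral_add nn_integral_cmult)
    finally show ?thesis .
  qed
  moreover have "(\<integral>\<^sup>+\<omega>. ennreal ((norm (iter (hist (Suc k) \<omega>) k - xstar))\<^sup>2 + \<gamma>\<^sup>2 * (M2\<^sup>2 + L\<^sup>2)) \<partial>M)
      = (\<integral>\<^sup>+\<omega>. ennreal ((norm (iter (\<lambda>t. \<xi> t \<omega>) k - xstar))\<^sup>2) \<partial>M) + ennreal (\<gamma>\<^sup>2 * (M2\<^sup>2 + L\<^sup>2))"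
  proof -
    have "(\<lambda>\<omega>. (norm (iter (\<lambda>t. \<xi> t \<omega>) k - xstar))\<^sup>2) \<in> borel_measurable M"
      using iter_path_measurable[of k] by measurable
    then show ?thesis
      by (simp only: iter_hist lessI) (intro M.nn_integral_add_const, auto)
  qed
  ultimately show ?thesis by simp
qed

lemma distance_recursion:
  "(\<integral>\<^sup>+\<omega>. ennreal ((norm (iter (\<lambda>t. \<xi> t \<omega>) k - xstar))\<^sup>2) \<partial>M)
     + ennreal (2 * \<gamma>) * (\<Sum>j<k. \<integral>\<^sup>+\<omega>. ennreal (gap j \<omega>) \<partial>M)
   \<le> ennreal ((norm (x1 - xstar))\<^sup>2 + real k * (\<gamma>\<^sup>2 * (M2\<^sup>2 + L\<^sup>2)))"
proof (induction k)
  case 0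
  then show ?case by (simp add: M.emeasure_space_1)
next
  case (Suc k)
  define V where "V = \<gamma>\<^sup>2 * (M2\<^sup>2 + L\<^sup>2)"
  define d where "d = (\<lambda>k. \<integral>\<^sup>+\<omega>. ennreal ((norm (iter (\<lambda>t. \<xi> t \<omega>) k - xstar))\<^sup>2) \<partial>M)"
  define S where "S = (\<Sum>j<k. \<integral>\<^sup>+\<omega>. ennreal (gap j \<omega>) \<partial>M)"
  define e where "e = (\<integral>\<^sup>+\<omega>. ennreal (gap k \<omega>) \<partial>M)"
  have "d (Suc k) + ennreal (2 * \<gamma>) * (S + e) = (d (Suc k) + ennreal (2 * \<gamma>) * e) + ennreal (2 * \<gamma>) * S"
    by (simp only: distrib_left add.assoc add.commute add.left_commute)
  also have "\<dots> \<le> (d k + ennreal V) + ennreal (2 * \<gamma>) * S"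
    using distance_step[of k] unfolding d_def e_def V_def by (rule add_right_mono)
  also have "\<dots> = (d k + ennreal (2 * \<gamma>) * S) + ennreal V"
    by (simp add: ac_simps)
  also have "\<dots> \<le> ennreal ((norm (x1 - xstar))\<^sup>2 + real k * V) + ennreal V"
    using Suc.IH unfolding d_def S_def V_def by (rule add_right_mono)
  also have "\<dots> = ennreal ((norm (x1 - xstar))\<^sup>2 + real (Suc k) * V)"
    by (subst ennreal_plus[symmetric]) (auto simp: V_def algebra_simps)
  finally show ?case
    unfolding d_def S_def e_def V_def by (simp add: sum.lessThan_Suc)
qed

lemma gap_sum_bound:
  assumes "0 < \<gamma>"
  shows "(\<Sum>j<N. \<integral>\<^sup>+\<omega>. ennreal (gap j \<omega>) \<partial>M)
    \<le> ennreal (((norm (x1 - xstar))\<^sup>2 + real N * (\<gamma>\<^sup>2 * (M2\<^sup>2 + L\<^sup>2))) / (2 * \<gamma>))"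
proof -
  define S where "S = (\<Sum>j<N. \<integral>\<^sup>+\<omega>. ennreal (gap j \<omega>) \<partial>M)"
  define R where "R = (norm (x1 - xstar))\<^sup>2 + real N * (\<gamma>\<^sup>2 * (M2\<^sup>2 + L\<^sup>2))"
  have "ennreal (2 * \<gamma>) * S \<le> ennreal R"
    using distance_recursion[of N] unfolding S_def R_def
    by (rule order_trans[rotated]) (rule add_increasing[OF zero_le order_refl])
  then have "ennreal (1 / (2 * \<gamma>)) * (ennreal (2 * \<gamma>) * S) \<le> ennreal (1 / (2 * \<gamma>)) * ennreal R"
    by (rule mult_left_mono) simp
  moreover have "ennreal (1 / (2 * \<gamma>)) * (ennreal (2 * \<gamma>) * S) = S"
    using assms by (simp add: mult.assoc[symmetric] ennreal_mult[symmetric])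
  moreover have "ennreal (1 / (2 * \<gamma>)) * ennreal R = ennreal (R / (2 * \<gamma>))"
    using assms by (subst ennreal_mult[symmetric]) (auto simp: R_def)
  ultimately show ?thesis unfolding S_def R_def by simp
qed

lemma gap_sum_diameter:
  assumes diam: "\<And>x. x \<in> X \<Longrightarrow> norm (x - x1) \<le> D"
    and s: "0 < s" "s\<^sup>2 = 2 * (M2\<^sup>2 + L\<^sup>2)" and N: "0 < N"
    and stepsize: "\<gamma> = D / (s * sqrt (real N))"
  shows "(\<Sum>j<N. \<integral>\<^sup>+\<omega>. ennreal (gap j \<omega>) \<partial>M) \<le> ennreal (D * s * sqrt (real N))"
proof (cases "D = 0")
  case True
  then have "x = x1" if "x \<in> X" for x
    using diam[OF that] by simp
  then have "iter (\<lambda>t. \<xi> t \<omega>) j = x1" "xstar = x1" for j \<omega>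
    using iter_in_X xstar_in by blast+
  then have "gap j \<omega> = 0" for j \<omega>
    unfolding gap_def by simp
  then show ?thesis by simp
next
  case False
  then have D: "0 < D" using diam[OF x1_in] by simp
  define r where "r = sqrt (real N)"
  have r: "0 < r" "r\<^sup>2 = real N" using N by (auto simp: r_def)
  have stepsize': "\<gamma> = D / (s * r)" unfolding stepsize r_def ..
  have "0 < \<gamma>" using D s r by (simp add: stepsize')
  have "(norm (x1 - xstar))\<^sup>2 \<le> D\<^sup>2"
    using diam[OF xstar_in] by (simp add: norm_minus_commute power_mono)
  moreover have "r\<^sup>2 * (\<gamma>\<^sup>2 * (s\<^sup>2 / 2)) = real N * (\<gamma>\<^sup>2 * (M2\<^sup>2 + L\<^sup>2))"
    by (simp add: r(2) s(2))
  ultimately have "((norm (x1 - xstar))\<^sup>2 + real N * (\<gamma>\<^sup>2 * (M2\<^sup>2 + L\<^sup>2))) / (2 * \<gamma>) \<le> D * s * r"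
    using stepsize_tradeoff[OF D s(1) r(1) stepsize'] by metis
  then show ?thesis
    unfolding r_def by (rule order_trans[OF gap_sum_bound[OF \<open>0 < \<gamma>\<close>] ennreal_leI])
qed

lemma estimate_decomposition:
  assumes "0 < N"
  shows "(1 / real N) * (\<Sum>\<tau>=1..N. g (iter (\<lambda>t. \<xi> t \<omega>) (\<tau> - 1)) (\<xi> \<tau> \<omega>)) - f xstar
    = noise (\<lambda>t. \<xi> t \<omega>) N / real N + (\<Sum>j<N. gap j \<omega>) / real N"
proof -
  have "(\<Sum>\<tau>=1..N. g (iter (\<lambda>t. \<xi> t \<omega>) (\<tau> - 1)) (\<xi> \<tau> \<omega>))
      = noise (\<lambda>t. \<xi> t \<omega>) N + (\<Sum>j<N. gap j \<omega>) + real N * f xstar"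
    by (simp add: sum.atLeast1_atMost_eq noise_def gap_def sum_subtractf)
  then show ?thesis using assms by (simp add: field_simps)
qed

lemma error_pointwise_bound:
  assumes N: "0 < N" and c: "0 < c"
  shows "\<bar>(1 / real N) * (\<Sum>\<tau>=1..N. g (iter (\<lambda>t. \<xi> t \<omega>) (\<tau> - 1)) (\<xi> \<tau> \<omega>)) - f xstar\<bar>
    \<le> 1 / (2 * c * real N) * (noise (\<lambda>t. \<xi> t \<omega>) N)\<^sup>2 + c / (2 * real N) + 1 / real N * (\<Sum>j<N. gap j \<omega>)"
proof -
  let ?S = "noise (\<lambda>t. \<xi> t \<omega>) N"
  have "0 \<le> (\<Sum>j<N. gap j \<omega>)" by (simp add: sum_nonneg gap_nonneg)
  then have "\<bar>(1 / real N) * (\<Sum>\<tau>=1..N. g (iter (\<lambda>t. \<xi> t \<omega>) (\<tau> - 1)) (\<xi> \<tau> \<omega>)) - f xstar\<bar>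
      \<le> \<bar>?S\<bar> / real N + (\<Sum>j<N. gap j \<omega>) / real N"
    unfolding estimate_decomposition[OF N] using N by (simp add: abs_divide order_trans[OF abs_triangle_ineq])
  also have "\<dots> \<le> (?S\<^sup>2 / (2 * c) + c / 2) / real N + (\<Sum>j<N. gap j \<omega>) / real N"
    using abs_le_square_plus[OF c] N by (simp add: divide_right_mono)
  also have "\<dots> = 1 / (2 * c * real N) * ?S\<^sup>2 + c / (2 * real N) + 1 / real N * (\<Sum>j<N. gap j \<omega>)"
    using N c by (simp add: field_simps)
  finally show ?thesis .
qed

lemma expected_error_bound:
  assumes N: "0 < N" and c: "0 < c" and "0 \<le> B"
    and gaps: "(\<Sum>j<N. \<integral>\<^sup>+\<omega>. ennreal (gap j \<omega>) \<partial>M) \<le> ennreal B"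
  shows "(\<integral>\<^sup>+\<omega>. ennreal \<bar>(1 / real N) * (\<Sum>\<tau>=1..N. g (iter (\<lambda>t. \<xi> t \<omega>) (\<tau> - 1)) (\<xi> \<tau> \<omega>)) - f xstar\<bar> \<partial>M)
    \<le> ennreal (M1\<^sup>2 / (2 * c) + c / (2 * real N) + B / real N)"
    (is "(\<integral>\<^sup>+\<omega>. ennreal \<bar>?err \<omega>\<bar> \<partial>M) \<le> _")
proof -
  let ?S = "\<lambda>\<omega>. noise (\<lambda>t. \<xi> t \<omega>) N"
  have pointwise: "ennreal \<bar>?err \<omega>\<bar> \<le> ennreal (1 / (2 * c * real N)) * ennreal ((?S \<omega>)\<^sup>2)
      + ennreal (c / (2 * real N)) + ennreal (1 / real N) * (\<Sum>j<N. ennreal (gap j \<omega>))" for \<omega>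
  proof -
    have gaps_nonneg: "0 \<le> (\<Sum>j<N. gap j \<omega>)" by (simp add: sum_nonneg gap_nonneg)
    have "ennreal \<bar>?err \<omega>\<bar>
        \<le> ennreal (1 / (2 * c * real N) * (?S \<omega>)\<^sup>2 + c / (2 * real N) + 1 / real N * (\<Sum>j<N. gap j \<omega>))"
      by (rule ennreal_leI[OF error_pointwise_bound[OF N c]])
    also have "\<dots> = ennreal (1 / (2 * c * real N) * (?S \<omega>)\<^sup>2)
      + ennreal (c / (2 * real N)) + ennreal (1 / real N * (\<Sum>j<N. gap j \<omega>))"
      using N c gaps_nonneg by (intro ennreal_plus3) auto
    also have "\<dots> = ennreal (1 / (2 * c * real N)) * ennreal ((?S \<omega>)\<^sup>2)
      + ennreal (c / (2 * real N)) + ennreal (1 / real N) * ennreal (\<Sum>j<N. gap j \<omega>)"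
      using c gaps_nonneg by (subst (1 2) ennreal_mult) auto
    also have "ennreal (\<Sum>j<N. gap j \<omega>) = (\<Sum>j<N. ennreal (gap j \<omega>))"
      using gap_nonneg by (simp add: sum_ennreal)
    finally show ?thesis .
  qed
  have "(\<integral>\<^sup>+\<omega>. ennreal \<bar>?err \<omega>\<bar> \<partial>M)
      \<le> (\<integral>\<^sup>+\<omega>. ennreal (1 / (2 * c * real N)) * ennreal ((?S \<omega>)\<^sup>2)
      + ennreal (c / (2 * real N)) + ennreal (1 / real N) * (\<Sum>j<N. ennreal (gap j \<omega>)) \<partial>M)"
    by (intro nn_integral_mono pointwise)
  also have "\<dots> = ennreal (1 / (2 * c * real N)) * (\<integral>\<^sup>+\<omega>. ennreal ((?S \<omega>)\<^sup>2) \<partial>M)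
        + ennreal (c / (2 * real N)) + ennreal (1 / real N) * (\<Sum>j<N. \<integral>\<^sup>+\<omega>. ennreal (gap j \<omega>) \<partial>M)"
    using noise_path_measurable[of N] gap_measurable
    by (simp add: nn_integral_add nn_integral_cmult nn_integral_sum M.emeasure_space_1)
  also have "\<dots> \<le> ennreal (1 / (2 * c * real N)) * ennreal (real N * M1\<^sup>2)
        + ennreal (c / (2 * real N)) + ennreal (1 / real N) * ennreal B"
    by (intro add_mono mult_left_mono noise_second_moment gaps order_refl) simp_all
  also have "\<dots> = ennreal (M1\<^sup>2 / (2 * c) + c / (2 * real N) + B / real N)"
  proof -
    have "ennreal (1 / (2 * c * real N)) * ennreal (real N * M1\<^sup>2) = ennreal (M1\<^sup>2 / (2 * c))"
      using N c by (subst ennreal_mult[symmetric]) auto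
    moreover have "ennreal (1 / real N) * ennreal B = ennreal (B / real N)"
      using \<open>0 \<le> B\<close> by (subst ennreal_mult[symmetric]) auto
    ultimately show ?thesis
      using N c \<open>0 \<le> B\<close> by (simp only: ennreal_plus3 zero_le_divide_iff) simp
  qed
  finally show ?thesis .
qed

end

theorem lemma2:
  fixes M :: "'m measure" and P :: "'b measure"
    and \<xi> :: "nat \<Rightarrow> 'm \<Rightarrow> 'b"
    and X :: "'a::euclidean_space set"
    and g :: "'a \<Rightarrow> 'b \<Rightarrow> real" and G :: "'a \<Rightarrow> 'b \<Rightarrow> 'a"
    and f :: "'a \<Rightarrow> real"
    and L M1 M2 :: real and x1 xstar :: 'a and N :: nat
  assumes probM: "prob_space M"
    and probP: "prob_space P"
    and xi_rv: "\<And>t. \<xi> t \<in> measurable M P"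
    and xi_distr: "\<And>t. distr M P (\<xi> t) = P"
    and xi_indep: "prob_space.indep_vars M (\<lambda>_. P) \<xi> UNIV"
    and X_ne: "X \<noteq> {}" and X_closed: "closed X" and X_bounded: "bounded X" and X_convex: "convex X"
    and g_meas: "(\<lambda>(x, s). g x s) \<in> borel_measurable (borel \<Otimes>\<^sub>M P)"
    and g_convex: "\<And>s. s \<in> space P \<Longrightarrow> convex_on UNIV (\<lambda>x. g x s)"
    and g_int: "\<And>x. integrable P (g x)"
    and G_meas: "(\<lambda>(x, s). G x s) \<in> borel_measurable (borel \<Otimes>\<^sub>M P)"
    and G_subgrad: "\<And>x s. x \<in> X \<Longrightarrow> s \<in> space P \<Longrightarrow> is_subgradient (\<lambda>y. g y s) x (G x s)"
    and f_def: "\<And>x. f x = (\<integral>s. g x s \<partial>P)"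
    and f_convex: "convex_on X f"
    and f_lip: "\<exists>C. C-lipschitz_on X f"
    and xstar_in: "xstar \<in> X" and xstar_min: "\<And>x. x \<in> X \<Longrightarrow> f xstar \<le> f x"
    and A1: "\<And>x v. x \<in> X \<Longrightarrow> is_subgradient f x v \<Longrightarrow> norm v \<le> L"
    and A2_int: "\<And>x. x \<in> X \<Longrightarrow> integrable P (G x)"
    and A2_sub: "\<And>x. x \<in> X \<Longrightarrow> is_subgradient f x (\<integral>s. G x s \<partial>P)"
    and M1_pos: "0 < M1" and M2_pos: "0 < M2"
    and A3_1: "\<And>x. x \<in> X \<Longrightarrow> (\<integral>\<^sup>+ s. ennreal ((g x s - f x)\<^sup>2) \<partial>P) \<le> ennreal (M1\<^sup>2)"
    and A3_2: "\<And>x. x \<in> X \<Longrightarrow>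
       (\<integral>\<^sup>+ s. ennreal ((norm (G x s - (\<integral>s'. G x s' \<partial>P)))\<^sup>2) \<partial>P) \<le> ennreal (M2\<^sup>2)"
    and x1_in: "x1 \<in> X"
    and N_pos: "1 \<le> N"
  shows "let D = (SUP x\<in>X. norm (x - x1));
             \<gamma> = D / (sqrt (2 * (M2\<^sup>2 + L\<^sup>2)) * sqrt (real N));
             gN = (\<lambda>\<omega>. (1 / real N) *
                    (\<Sum>\<tau>=1..N. g (rsa X G \<gamma> x1 (\<lambda>t. \<xi> t \<omega>) (\<tau> - 1)) (\<xi> \<tau> \<omega>)))
         in (\<integral>\<^sup>+ \<omega>. ennreal \<bar>gN \<omega> - f xstar\<bar> \<partial>M)
              \<le> ennreal ((M1 + D * sqrt (2 * (M2\<^sup>2 + L\<^sup>2))) / sqrt (real N))"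
proof -
  define D where "D = (SUP x\<in>X. norm (x - x1))"
  define s where "s = sqrt (2 * (M2\<^sup>2 + L\<^sup>2))"
  define r where "r = sqrt (real N)"
  define \<gamma> where "\<gamma> = D / (s * r)"
  have diam: "\<And>x. x \<in> X \<Longrightarrow> norm (x - x1) \<le> D"
    unfolding D_def using X_bounded by (rule norm_diff_le_SUP)
  have "0 \<le> L" using A1[OF x1_in A2_sub[OF x1_in]] by (meson norm_ge_zero order_trans)
  then have s: "0 < s" "s\<^sup>2 = 2 * (M2\<^sup>2 + L\<^sup>2)"
    using M2_pos by (auto simp: s_def intro: add_pos_nonneg)
  have r: "0 < r" "r\<^sup>2 = real N" using N_pos by (auto simp: r_def)
  have "0 \<le> D" using diam[OF x1_in] by simp
  then have "0 \<le> \<gamma>" using s r by (simp add: \<gamma>_def)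
  have iid: "iid_samples M P \<xi>"
    using probM probP xi_rv xi_distr xi_indep by (simp add: iid_samples_def iid_samples_axioms_def)
  interpret rsa_setting M P \<xi> X g G f L M1 M2 x1 xstar \<gamma>
    by (rule rsa_setting.intro[OF iid], intro rsa_setting_axioms.intro) (fact | (rule assms; assumption))+
  have "0 < N" using N_pos by simp
  have gaps: "(\<Sum>j<N. \<integral>\<^sup>+\<omega>. ennreal (gap j \<omega>) \<partial>M) \<le> ennreal (D * s * r)"
  proof -
    have "\<gamma> = D / (s * sqrt (real N))" by (simp add: \<gamma>_def r_def)
    from gap_sum_diameter[OF diam s \<open>0 < N\<close> this] show ?thesis by (simp add: r_def)
  qed
  have "M1\<^sup>2 / (2 * (r * M1)) + r * M1 / (2 * real N) + D * s * r / real N = (M1 + D * s) / r"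
    using final_bound_arith[OF M1_pos r(1)] unfolding r(2) .
  from expected_error_bound[OF \<open>0 < N\<close> _ _ gaps, of "r * M1", unfolded this]
  have "(\<integral>\<^sup>+\<omega>. ennreal \<bar>(1 / real N) * (\<Sum>\<tau>=1..N. g (rsa X G \<gamma> x1 (\<lambda>t. \<xi> t \<omega>) (\<tau> - 1)) (\<xi> \<tau> \<omega>)) - f xstar\<bar> \<partial>M)
    \<le> ennreal ((M1 + D * s) / r)"
    using M1_pos r(1) s(1) \<open>0 \<le> D\<close> by simp
  then show ?thesis
    unfolding Let_def D_def[symmetric] s_def[symmetric] r_def[symmetric] \<gamma>_def[symmetric] .
qed

end
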